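(* Let $\Omega\subset\mathbb{R}^n$ be open, $\omega\in A_\infty$, and $\varphi(x,t)=t^{p(x)}$ where $p:\Omega\to[1,\infty]$ is measurable with $\frac1p\in\mathcal P^{\log}(\Omega)$. Then $\varphi$ satisfies (A1)$_\omega$.
   Context: Convention: $t^\infty:=\infty\cdot\chi_{(1,\infty)}(t)$ and $1/\infty:=0$. A weight is a nonnegative locally integrable function $\omega$ on $\mathbb{R}^n$, $\omega(E):=\int_E\omega\,dx$. For $1<q<\infty$, $\omega\in A_q$ means $\sup_B|B|^{-q}\omega(B)\big(\int_B\omega^{-q'/q}dx\big)^{q-1}<\infty$ with $1/q+1/q'=1$, supremum over open balls; $\omega\in A_1$ means $M\omega\le C\omega$ a.e. ($M$ the Hardy–Littlewood maximal operator); $A_\infty:=\bigcup_{q\in[1,\infty)}A_q$. $\frac1p\in\mathcal P^{\log}(\Omega)$ means: there is $c_1>0$ with $\big|\frac1{p(x)}-\frac1{p(y)}\big|\le\frac{c_1}{\log(e+1/|x-y|)}$ for all $x,y\in\Omega$; and there exist $p_\infty\in[1,\infty]$ and $c_2>0$ with $\big|\frac1{p(x)}-\frac1{p_\infty}\big|\le\frac{c_2}{\log(e+|x|)}$ for all $x\in\Omega$. (A1)$_\omega$: there is $\beta_1\in(0,1]$ such that $\varphi(x,\beta_1t)\le\varphi(y,t)$ for every open ball $B$ with $\omega(B)\le1$, a.e. $x,y\in B\cap\Omega$, and every $t\ge0$ with $\varphi(y,t)\in[1,1/\omega(B)]$. *)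

theory Defs
  imports "HOL-Analysis.Analysis"
begin

definition weight :: "('a::euclidean_space \<Rightarrow> real) \<Rightarrow> bool" where
  "weight w \<longleftrightarrow> (\<forall>x. 0 \<le> w x) \<and>
     (\<forall>K. compact K \<longrightarrow> set_integrable lebesgue K w) \<and>
     \<not> (AE x in lebesgue. w x = 0)"

definition wmeas :: "('a::euclidean_space \<Rightarrow> real) \<Rightarrow> 'a set \<Rightarrow> ennreal" where
  "wmeas w E = (\<integral>\<^sup>+ x \<in> E. ennreal (w x) \<partial>lebesgue)"

definition maximal_fn :: "('a::euclidean_space \<Rightarrow> real) \<Rightarrow> 'a \<Rightarrow> ennreal" where
  "maximal_fn f x = (SUP (c, r) \<in> {(c, r). 0 < r \<and> x \<in> ball c r}.
      (\<integral>\<^sup>+ y \<in> ball c r. ennreal \<bar>f y\<bar> \<partial>lebesgue) / emeasure lebesgue (ball c r))"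

definition ennpow :: "ennreal \<Rightarrow> real \<Rightarrow> ennreal" where
  "ennpow a s = (if a = \<infinity> then \<infinity> else ennreal (enn2real a powr s))"

definition negpow :: "real \<Rightarrow> real \<Rightarrow> ennreal" where
  "negpow a s = (if a = 0 then \<infinity> else ennreal (a powr (- s)))"

definition A_q :: "real \<Rightarrow> ('a::euclidean_space \<Rightarrow> real) \<Rightarrow> bool" where
  "A_q q w \<longleftrightarrow> weight w \<and> (\<exists>C::real. \<forall>c r. 0 < r \<longrightarrow>
      ennreal (measure lebesgue (ball c r) powr (- q)) * wmeas w (ball c r)
        * ennpow (\<integral>\<^sup>+ x \<in> ball c r. negpow (w x) ((q / (q - 1)) / q) \<partial>lebesgue) (q - 1)
      \<le> ennreal C)"

definition A_1 :: "('a::euclidean_space \<Rightarrow> real) \<Rightarrow> bool" where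
  "A_1 w \<longleftrightarrow> weight w \<and> (\<exists>C::real. AE x in lebesgue. maximal_fn w x \<le> ennreal C * ennreal (w x))"

definition A_infty :: "('a::euclidean_space \<Rightarrow> real) \<Rightarrow> bool" where
  "A_infty w \<longleftrightarrow> A_1 w \<or> (\<exists>q>1. A_q q w)"

definition ereal_recip :: "ereal \<Rightarrow> real" where
  "ereal_recip a = (if a = \<infinity> then 0 else 1 / real_of_ereal a)"

definition recip_Plog :: "'a::euclidean_space set \<Rightarrow> ('a \<Rightarrow> ereal) \<Rightarrow> bool" where
  "recip_Plog \<Omega> p \<longleftrightarrow>
     (\<exists>c1>0. \<forall>x\<in>\<Omega>. \<forall>y\<in>\<Omega>.
        \<bar>ereal_recip (p x) - ereal_recip (p y)\<bar> \<le> c1 / ln (exp 1 + 1 / norm (x - y))) \<and>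
     (\<exists>p_inf c2. 1 \<le> p_inf \<and> 0 < c2 \<and> (\<forall>x\<in>\<Omega>.
        \<bar>ereal_recip (p x) - ereal_recip p_inf\<bar> \<le> c2 / ln (exp 1 + norm x)))"

definition var_exp_phi :: "('a \<Rightarrow> ereal) \<Rightarrow> 'a \<Rightarrow> real \<Rightarrow> ennreal" where
  "var_exp_phi p x t = (if p x = \<infinity> then (if 1 < t then \<infinity> else 0)
                        else ennreal (t powr real_of_ereal (p x)))"

definition A1_w :: "('a::euclidean_space \<Rightarrow> real) \<Rightarrow> 'a set \<Rightarrow> ('a \<Rightarrow> real \<Rightarrow> ennreal) \<Rightarrow> bool" where
  "A1_w w \<Omega> \<phi> \<longleftrightarrow> (\<exists>\<beta>1. 0 < \<beta>1 \<and> \<beta>1 \<le> 1 \<and>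
     (\<forall>c r. 0 < r \<longrightarrow> wmeas w (ball c r) \<le> 1 \<longrightarrow>
        (AE x in lebesgue. AE y in lebesgue. x \<in> ball c r \<inter> \<Omega> \<longrightarrow> y \<in> ball c r \<inter> \<Omega> \<longrightarrow>
           (\<forall>t\<ge>0. 1 \<le> \<phi> y t \<and> \<phi> y t \<le> 1 / wmeas w (ball c r) \<longrightarrow> \<phi> x (\<beta>1 * t) \<le> \<phi> y t))))"

end

theory Submission
  imports Defs
begin

(*
  An A_infty weight satisfies w(B(c,R)) <= C (R/r)^s w(B(c,r)) for r <= R; for A_q the
  usual appeal to Hoelder's inequality is replaced by Young's inequality
  1 <= u a + (u a)^(-1/(q-1)), integrated over B(c,r). Comparing B(c,r) with a fixed ball
  B(0,R0) of positive weight gives the lower bound w(B(c,r)) >= kappa (r/(1+r+|c|))^s.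

  The two log-Hoelder conditions on 1/p (the local one for small balls, the decay one for
  balls far from the origin) bound |1/p(x) - 1/p(y)| ln((1+r+|c|)/r) for x, y in B(c,r),
  hence |1/p(x) - 1/p(y)| ln(1/w(B)) <= M. If S = t^p(y) lies in [1, 1/w(B)], then
  t = S^(1/p(y)) and e^(-M) t <= S^(1/p(x)), which is phi(x, e^(-M) t) <= phi(y, t).
  So beta_1 = e^(-M) works, for all x, y and not only almost all.
*)

section \<open>Weighted measure of balls\<close>

lemma weight_nonneg: "weight w \<Longrightarrow> 0 \<le> w x"
  unfolding weight_def by auto

lemma weight_ball_integrand_measurable:
  fixes w :: "'a::euclidean_space \<Rightarrow> real" and f :: "real \<Rightarrow> ennreal"
  assumes "weight w" and [measurable]: "f \<in> borel_measurable borel"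
  shows "(\<lambda>x. f (w x) * indicator (ball c r) x) \<in> borel_measurable lebesgue"
proof -
  have "set_integrable lebesgue (cball c r) w"
    using assms(1) unfolding weight_def by auto
  then have [measurable]: "(\<lambda>x. indicator (cball c r) x * w x) \<in> borel_measurable lebesgue"
    unfolding set_integrable_def by (simp add: borel_measurable_integrable)
  have "(\<lambda>x. f (indicator (cball c r) x * w x)) \<in> borel_measurable lebesgue"
    by (rule measurable_compose[OF _ assms(2)]) measurable
  moreover have [measurable]: "ball c r \<in> sets lebesgue" by simp
  ultimately have "(\<lambda>x. f (indicator (cball c r) x * w x) * indicator (ball c r) x) \<in> borel_measurable lebesgue"
    by measurable
  also have "(\<lambda>x. f (indicator (cball c r) x * w x) * indicator (ball c r) x)
      = (\<lambda>x. f (w x) * indicator (ball c r) x)"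
    by (auto simp: indicator_def)
  finally show ?thesis .
qed

lemma wmeas_ball_finite:
  assumes "weight w"
  shows "wmeas w (ball c r) < \<infinity>"
proof -
  have "integrable lebesgue (\<lambda>x. indicator (cball c r) x * w x)"
    using assms unfolding weight_def set_integrable_def by auto
  then have "(\<integral>\<^sup>+x. ennreal (norm (indicator (cball c r) x * w x)) \<partial>lebesgue) < \<infinity>"
    by (simp add: integrable_iff_bounded)
  moreover have "wmeas w (ball c r) \<le> (\<integral>\<^sup>+x. ennreal (norm (indicator (cball c r) x * w x)) \<partial>lebesgue)"
    unfolding wmeas_def
    by (intro nn_integral_mono) (auto simp: indicator_def weight_nonneg[OF assms])
  ultimately show ?thesis by order
qed

lemma wmeas_mono: "A \<subseteq> B \<Longrightarrow> wmeas w A \<le> wmeas w B"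
  unfolding wmeas_def by (intro nn_integral_mono) (auto simp: indicator_def)

definition wball :: "('a::euclidean_space \<Rightarrow> real) \<Rightarrow> 'a \<Rightarrow> real \<Rightarrow> real" where
  "wball w c r = enn2real (wmeas w (ball c r))"

lemma wmeas_ball_eq_wball: "weight w \<Longrightarrow> wmeas w (ball c r) = ennreal (wball w c r)"
  unfolding wball_def using wmeas_ball_finite[of w c r] by (simp add: ennreal_enn2real_if)

lemma wball_nonneg: "0 \<le> wball w c r"
  unfolding wball_def by simp

lemma wball_mono: "weight w \<Longrightarrow> ball c r \<subseteq> ball c' r' \<Longrightarrow> wball w c r \<le> wball w c' r'"
  using wmeas_mono[of "ball c r" "ball c' r'" w] by (simp add: wmeas_ball_eq_wball wball_nonneg)

lemma emeasure_lebesgue_ball: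
  fixes c :: "'a::euclidean_space"
  shows "emeasure lebesgue (ball c r) = ennreal (measure lebesgue (ball c r))"
  using emeasure_lborel_ball_finite[of c r] by (simp add: emeasure_eq_ennreal_measure)

lemma measure_lebesgue_ball_ratio:
  fixes c :: "'a::euclidean_space"
  assumes "0 < r" "0 < R"
  shows "measure lebesgue (ball c R) / measure lebesgue (ball c r) = (R / r) ^ DIM('a)"
proof -
  have "unit_ball_vol (real DIM('a)) \<noteq> 0"
    using unit_ball_vol_pos[of "real DIM('a)"] by linarith
  then show ?thesis using assms by (simp add: content_ball power_divide)
qed

section \<open>Doubling and lower bounds for A_infty weights\<close>

lemma ball_average_le_maximal_fn:
  assumes "0 < R" "x \<in> ball c R"
  shows "(\<integral>\<^sup>+ y \<in> ball c R. ennreal \<bar>f y\<bar> \<partial>lebesgue) / emeasure lebesgue (ball c R) \<le> maximal_fn f x"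
  unfolding maximal_fn_def by (rule SUP_upper2[where i="(c, R)"]) (use assms in auto)

lemma maximal_bound_ball_average:
  fixes w :: "'a::euclidean_space \<Rightarrow> real"
  assumes wt: "weight w" and "0 \<le> C" "0 < r" "r \<le> R"
    and maximal: "AE x in lebesgue. maximal_fn w x \<le> ennreal C * ennreal (w x)"
  shows "wball w c R / measure lebesgue (ball c R) * measure lebesgue (ball c r) \<le> C * wball w c r"
proof -
  define avg where "avg = wball w c R / measure lebesgue (ball c R)"
  have "0 \<le> avg" unfolding avg_def by (simp add: wball_nonneg)
  have avg_le: "ennreal avg \<le> maximal_fn w x" if "x \<in> ball c r" for x
    using ball_average_le_maximal_fn[of R x c w] \<open>0 < r\<close> \<open>r \<le> R\<close> that
    by (simp add: avg_def weight_nonneg[OF wt] wmeas_ball_eq_wball[OF wt, unfolded wmeas_def]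
        emeasure_lebesgue_ball divide_ennreal wball_nonneg)
  have AE_bound: "AE x in lebesgue. ennreal avg * indicator (ball c r) x
      \<le> ennreal C * (ennreal (w x) * indicator (ball c r) x)"
    using maximal by eventually_elim (use avg_le in \<open>auto simp: indicator_def intro: order_trans\<close>)
  have "ennreal (avg * measure lebesgue (ball c r))
      = (\<integral>\<^sup>+x. ennreal avg * indicator (ball c r) x \<partial>lebesgue)"
    using \<open>0 \<le> avg\<close>
    by (simp add: nn_integral_cmult_indicator emeasure_lebesgue_ball ennreal_mult)
  also have "\<dots> \<le> (\<integral>\<^sup>+x. ennreal C * (ennreal (w x) * indicator (ball c r) x) \<partial>lebesgue)"
    using AE_bound by (rule nn_integral_mono_AE)
  also have "\<dots> = ennreal C * wmeas w (ball c r)"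
    unfolding wmeas_def
    by (rule nn_integral_cmult) (rule weight_ball_integrand_measurable[OF wt]; simp)
  also have "\<dots> = ennreal (C * wball w c r)"
    using \<open>0 \<le> C\<close> wball_nonneg[of w c r] by (simp add: wmeas_ball_eq_wball[OF wt] ennreal_mult)
  finally show ?thesis
    using \<open>0 \<le> C\<close> wball_nonneg[of w c r] by (simp add: avg_def)
qed

lemma A_1_doubling:
  fixes w :: "'a::euclidean_space \<Rightarrow> real"
  assumes "A_1 w"
  shows "\<exists>C>0. \<forall>c r R. 0 < r \<longrightarrow> r \<le> R \<longrightarrow>
    wball w c R \<le> C * (measure lebesgue (ball c R) / measure lebesgue (ball c r)) * wball w c r"
proof -
  have wt: "weight w" using assms unfolding A_1_def by auto
  obtain C0 where C0: "AE x in lebesgue. maximal_fn w x \<le> ennreal C0 * ennreal (w x)"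
    using assms unfolding A_1_def by auto
  define C where "C = max C0 1"
  have "AE x in lebesgue. maximal_fn w x \<le> ennreal C * ennreal (w x)"
    using C0
  proof eventually_elim
    case (elim x)
    have "ennreal C0 * ennreal (w x) \<le> ennreal C * ennreal (w x)"
      unfolding C_def by (intro mult_right_mono) auto
    with elim show ?case by (rule order_trans)
  qed
  then have "wball w c R / measure lebesgue (ball c R) * measure lebesgue (ball c r) \<le> C * wball w c r"
    if "0 < r" "r \<le> R" for c r R
    using that by (intro maximal_bound_ball_average[OF wt]) (auto simp: C_def)
  moreover have "0 < measure lebesgue (ball c r)" "0 < measure lebesgue (ball c R)"
    if "0 < r" "r \<le> R" for c :: 'a and r R
    using that by simp_all
  ultimately have "wball w c R \<le> C * (measure lebesgue (ball c R) / measure lebesgue (ball c r)) * wball w c r"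
    if "0 < r" "r \<le> R" for c r R
    using that by (force simp: field_simps)
  moreover have "C > 0" unfolding C_def by simp
  ultimately show ?thesis by blast
qed

lemma negpow_measurable [measurable]: "(\<lambda>a. negpow a e) \<in> borel_measurable borel"
  unfolding negpow_def by measurable

lemma one_le_add_powr_neg:
  fixes z e :: real
  assumes "0 < z" "0 < e"
  shows "1 \<le> z + z powr - e"
proof (cases "1 \<le> z")
  case False
  then have "1 \<le> (1 / z) powr e" using assms by (intro ge_one_powr_ge_zero) auto
  also have "(1 / z) powr e = z powr - e" using assms by (simp add: powr_divide powr_minus_divide)
  finally show ?thesis using assms by simp
qed (simp add: add_increasing2)

lemma one_le_young_negpow:
  fixes a u e :: real
  assumes "0 \<le> a" "0 < u" "0 < e"
  shows "1 \<le> ennreal (u * a) + ennreal (u powr - e) * negpow a e"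
proof (cases "a = 0")
  case True
  then show ?thesis using assms by (simp add: negpow_def ennreal_mult_top)
next
  case False
  with assms have "1 \<le> u * a + (u * a) powr - e" by (intro one_le_add_powr_neg) auto
  then have "ennreal 1 \<le> ennreal (u * a) + ennreal ((u * a) powr - e)"
    using assms by (simp flip: ennreal_plus)
  also have "ennreal ((u * a) powr - e) = ennreal (u powr - e) * negpow a e"
    using False assms by (simp add: negpow_def powr_mult ennreal_mult)
  finally show ?thesis by simp
qed

lemma emeasure_ball_le_wmeas_plus_negpow:
  fixes w :: "'a::euclidean_space \<Rightarrow> real"
  assumes wt: "weight w" and "0 < u" "0 < e" "r \<le> R"
  shows "emeasure lebesgue (ball c r)
    \<le> ennreal u * wmeas w (ball c r) + ennreal (u powr - e) * (\<integral>\<^sup>+x\<in>ball c R. negpow (w x) e \<partial>lebesgue)"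
proof -
  have "emeasure lebesgue (ball c r) = (\<integral>\<^sup>+x. indicator (ball c r) x \<partial>lebesgue)"
    by simp
  also have "\<dots> \<le> (\<integral>\<^sup>+x. ennreal u * (ennreal (w x) * indicator (ball c r) x)
      + ennreal (u powr - e) * (negpow (w x) e * indicator (ball c R) x) \<partial>lebesgue)"
  proof (rule nn_integral_mono)
    fix x
    have "1 \<le> ennreal (u * w x) + ennreal (u powr - e) * negpow (w x) e"
      using assms weight_nonneg[OF wt] by (intro one_le_young_negpow) auto
    moreover have "x \<in> ball c R" if "x \<in> ball c r" using that \<open>r \<le> R\<close> by auto
    ultimately show "indicator (ball c r) x \<le> ennreal u * (ennreal (w x) * indicator (ball c r) x)
      + ennreal (u powr - e) * (negpow (w x) e * indicator (ball c R) x)"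
      using assms weight_nonneg[OF wt] by (auto simp: indicator_def ennreal_mult)
  qed
  also have "\<dots> = ennreal u * wmeas w (ball c r)
      + ennreal (u powr - e) * (\<integral>\<^sup>+x\<in>ball c R. negpow (w x) e \<partial>lebesgue)"
  proof -
    have [measurable]: "(\<lambda>x. ennreal (w x) * indicator (ball c r) x) \<in> borel_measurable lebesgue"
      "(\<lambda>x. negpow (w x) e * indicator (ball c R) x) \<in> borel_measurable lebesgue"
      by (rule weight_ball_integrand_measurable[OF wt]; simp)+
    show ?thesis
      unfolding wmeas_def by (subst nn_integral_add) (measurable, simp add: nn_integral_cmult)
  qed
  finally show ?thesis .
qed

lemma powr_le_of_forall_le_add_powr_neg:
  fixes q m W J :: real
  assumes "1 < q" "0 < m" "0 \<le> W" "0 \<le> J"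
    and le: "\<And>u. 0 < u \<Longrightarrow> m \<le> u * W + u powr - (1 / (q - 1)) * J"
  shows "(m / 2) powr q \<le> W * J powr (q - 1)"
proof (cases "J = 0")
  case True
  define u where "u = m / (2 * W + 1)"
  have "m \<le> u * W" using le[of u] True assms by (simp add: u_def)
  also have "u * W < m" using assms by (simp add: u_def field_simps add_pos_nonneg)
  finally show ?thesis by simp
next
  case False
  define u where "u = (2 * J / m) powr (q - 1)"
  have "u powr - (1 / (q - 1)) = m / (2 * J)"
    using assms by (simp add: u_def powr_powr powr_minus_divide)
  then have "m \<le> u * W + m / 2"
    using le[of u] assms False by (simp add: u_def)
  then have "m / 2 \<le> (2 * J / m) powr (q - 1) * W" by (simp add: u_def)
  then have "(m / 2) powr (q - 1) * (m / 2) \<le> (m / 2) powr (q - 1) * ((2 * J / m) powr (q - 1) * W)"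
    by (rule mult_left_mono) simp
  also have "\<dots> = W * J powr (q - 1)"
    using assms False by (simp add: powr_mult[symmetric])
  finally show ?thesis
    using assms by (simp add: powr_diff)
qed

lemma measure_ball_powr_le_wball_negpow:
  fixes w :: "'a::euclidean_space \<Rightarrow> real"
  assumes wt: "weight w" and "1 < q" "0 < r" "r \<le> R" "0 \<le> J"
    and J: "(\<integral>\<^sup>+x\<in>ball c R. negpow (w x) (1 / (q - 1)) \<partial>lebesgue) = ennreal J"
  shows "(measure lebesgue (ball c r) / 2) powr q \<le> wball w c r * J powr (q - 1)"
proof (rule powr_le_of_forall_le_add_powr_neg)
  fix u :: real
  assume "0 < u"
  have "ennreal (measure lebesgue (ball c r))
      \<le> ennreal u * ennreal (wball w c r) + ennreal (u powr - (1 / (q - 1))) * ennreal J"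
    using emeasure_ball_le_wmeas_plus_negpow[OF wt \<open>0 < u\<close>, of "1 / (q - 1)" r R c]
      \<open>1 < q\<close> \<open>r \<le> R\<close> J
    by (simp add: emeasure_lebesgue_ball wmeas_ball_eq_wball[OF wt])
  then show "measure lebesgue (ball c r) \<le> u * wball w c r + u powr - (1 / (q - 1)) * J"
    using \<open>0 < u\<close> \<open>0 \<le> J\<close> wball_nonneg[of w c r]
    by (simp flip: ennreal_mult ennreal_plus)
qed (use assms wball_nonneg in auto)

lemma A_q_dual_bound:
  fixes w :: "'a::euclidean_space \<Rightarrow> real"
  assumes Aq: "A_q q w" and "1 < q"
  shows "\<exists>C>0. \<forall>c R. 0 < R \<longrightarrow> 0 < wball w c R \<longrightarrow>
    (\<exists>J\<ge>0. (\<integral>\<^sup>+x\<in>ball c R. negpow (w x) (1 / (q - 1)) \<partial>lebesgue) = ennreal J \<and>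
       wball w c R * J powr (q - 1) \<le> C * measure lebesgue (ball c R) powr q)"
proof -
  have wt: "weight w" using Aq unfolding A_q_def by auto
  obtain C0 where C0: "\<And>c R. 0 < R \<Longrightarrow>
      ennreal (measure lebesgue (ball c R) powr - q) * wmeas w (ball c R)
        * ennpow (\<integral>\<^sup>+x\<in>ball c R. negpow (w x) (1 / (q - 1)) \<partial>lebesgue) (q - 1)
      \<le> ennreal C0"
  proof -
    have "(q / (q - 1)) / q = 1 / (q - 1)" using \<open>1 < q\<close> by simp
    with Aq show ?thesis unfolding A_q_def by (simp only:) (blast intro: that)
  qed
  define C where "C = max C0 1"
  have "\<exists>J\<ge>0. (\<integral>\<^sup>+x\<in>ball c R. negpow (w x) (1 / (q - 1)) \<partial>lebesgue) = ennreal J \<and>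
       wball w c R * J powr (q - 1) \<le> C * measure lebesgue (ball c R) powr q"
    if "0 < R" "0 < wball w c R" for c R
  proof -
    define I where "I = (\<integral>\<^sup>+x\<in>ball c R. negpow (w x) (1 / (q - 1)) \<partial>lebesgue)"
    define B where "B = measure lebesgue (ball c R)"
    have "0 < B" using \<open>0 < R\<close> by (simp add: B_def)
    have bound: "ennreal (B powr - q) * ennreal (wball w c R) * ennpow I (q - 1) \<le> ennreal C0"
      using C0[OF \<open>0 < R\<close>, of c] by (simp add: B_def I_def wmeas_ball_eq_wball[OF wt])
    have "I \<noteq> \<infinity>"
    proof
      assume "I = \<infinity>"
      then have "ennreal (B powr - q) * ennreal (wball w c R) * ennpow I (q - 1) = \<infinity>"
        using \<open>0 < B\<close> that by (simp add: ennpow_def ennreal_mult_top)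
      with bound show False by (simp add: top_unique)
    qed
    then obtain J where J: "I = ennreal J" "0 \<le> J" by (cases I) auto
    have "ennreal (B powr - q * wball w c R * J powr (q - 1)) \<le> ennreal C"
      using bound J wball_nonneg[of w c R] order_trans[OF _ ennreal_leI[of C0 C]]
      by (simp add: ennpow_def ennreal_mult C_def)
    then have "B powr - q * wball w c R * J powr (q - 1) \<le> C"
      by (simp add: C_def)
    then have "wball w c R * J powr (q - 1) \<le> C * B powr q"
      using \<open>0 < B\<close> by (simp add: powr_minus field_simps)
    with J show ?thesis by (auto simp: I_def B_def)
  qed
  moreover have "C > 0" unfolding C_def by simp
  ultimately show ?thesis by blast
qed

lemma A_q_doubling:
  fixes w :: "'a::euclidean_space \<Rightarrow> real"
  assumes Aq: "A_q q w" and "1 < q"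
  shows "\<exists>C>0. \<forall>c r R. 0 < r \<longrightarrow> r \<le> R \<longrightarrow>
    wball w c R \<le> C * (measure lebesgue (ball c R) / measure lebesgue (ball c r)) powr q * wball w c r"
proof -
  have wt: "weight w" using Aq unfolding A_q_def by auto
  obtain C where "C > 0" and C: "\<And>c R. 0 < R \<Longrightarrow> 0 < wball w c R \<Longrightarrow>
    \<exists>J\<ge>0. (\<integral>\<^sup>+x\<in>ball c R. negpow (w x) (1 / (q - 1)) \<partial>lebesgue) = ennreal J \<and>
       wball w c R * J powr (q - 1) \<le> C * measure lebesgue (ball c R) powr q"
    using A_q_dual_bound[OF assms] by blast
  have "wball w c R \<le> 2 powr q * C * (measure lebesgue (ball c R) / measure lebesgue (ball c r)) powr q * wball w c r"
    if r: "0 < r" "r \<le> R" for c r R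
  proof (cases "wball w c R = 0")
    case False
    define m where "m = measure lebesgue (ball c r)"
    define B where "B = measure lebesgue (ball c R)"
    have "0 < m" "0 < B" using r by (simp_all add: m_def B_def)
    have "0 < wball w c R" using False wball_nonneg[of w c R] by simp
    then obtain J where "0 \<le> J"
      and J: "(\<integral>\<^sup>+x\<in>ball c R. negpow (w x) (1 / (q - 1)) \<partial>lebesgue) = ennreal J"
      and JB: "wball w c R * J powr (q - 1) \<le> C * B powr q"
      using C[of R c] r unfolding B_def by auto
    have "(m / 2) powr q \<le> wball w c r * J powr (q - 1)"
      unfolding m_def using wt \<open>1 < q\<close> r \<open>0 \<le> J\<close> J by (rule measure_ball_powr_le_wball_negpow)
    then have "(m / 2) powr q * wball w c R \<le> wball w c r * J powr (q - 1) * wball w c R"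
      by (rule mult_right_mono) (rule wball_nonneg)
    also have "\<dots> = wball w c r * (wball w c R * J powr (q - 1))"
      by (simp add: ac_simps)
    also have "\<dots> \<le> wball w c r * (C * B powr q)"
      using JB wball_nonneg[of w c r] by (rule mult_left_mono)
    finally show ?thesis
      using \<open>0 < m\<close> \<open>0 < B\<close> by (simp add: m_def B_def powr_divide field_simps)
  qed (use \<open>C > 0\<close> wball_nonneg[of w c r] in simp)
  moreover have "2 powr q * C > 0" using \<open>C > 0\<close> by simp
  ultimately show ?thesis by blast
qed

lemma A_infty_weight: "A_infty w \<Longrightarrow> weight w"
  unfolding A_infty_def A_1_def A_q_def by auto

lemma A_infty_doubling:
  fixes w :: "'a::euclidean_space \<Rightarrow> real"
  assumes "A_infty w"
  shows "\<exists>C>0. \<exists>s>0. \<forall>c r R. 0 < r \<longrightarrow> r \<le> R \<longrightarrow> wball w c R \<le> C * (R / r) powr s * wball w c r"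
proof -
  obtain C q where "0 < C" "1 \<le> q" and C: "\<And>c r R. 0 < r \<Longrightarrow> r \<le> R \<Longrightarrow>
      wball w c R \<le> C * (measure lebesgue (ball c R) / measure lebesgue (ball c r)) powr q * wball w c r"
  proof (cases "A_1 w")
    case True
    then show ?thesis
      using A_1_doubling[of w] that[of _ 1] by (auto simp: content_ball_gt_0_iff)
  next
    case False
    then obtain q where "1 < q" "A_q q w" using assms unfolding A_infty_def by blast
    then show ?thesis using A_q_doubling[of q w] that[of _ q] by auto
  qed
  have "wball w c R \<le> C * (R / r) powr (DIM('a) * q) * wball w c r" if "0 < r" "r \<le> R" for c r R
  proof -
    have ratio: "measure lebesgue (ball c R) / measure lebesgue (ball c r) = (R / r) powr DIM('a)"
      using measure_lebesgue_ball_ratio[of r R c] that by (simp add: powr_realpow)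
    have "wball w c R \<le> C * (measure lebesgue (ball c R) / measure lebesgue (ball c r)) powr q * wball w c r"
      using C that by blast
    then show ?thesis unfolding ratio powr_powr .
  qed
  moreover have "0 < DIM('a) * q" using \<open>1 \<le> q\<close> by simp
  ultimately show ?thesis using \<open>0 < C\<close> by blast
qed

lemma weight_ball_pos:
  fixes w :: "'a::euclidean_space \<Rightarrow> real"
  assumes wt: "weight w"
  shows "\<exists>R\<ge>1. 0 < wball w 0 R"
proof (rule ccontr)
  assume "\<not> ?thesis"
  then have null_balls: "wball w 0 R = 0" if "1 \<le> R" for R
    using that wball_nonneg[of w 0 R] by force
  have zero_on_balls: "AE x in lebesgue. x \<in> ball 0 (Suc n) \<longrightarrow> w x = 0" for n
  proof -
    have "(\<integral>\<^sup>+x. ennreal (w x) * indicator (ball 0 (Suc n)) x \<partial>lebesgue) = 0"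
      using null_balls[of "Suc n"]
      by (simp add: wmeas_ball_eq_wball[OF wt, unfolded wmeas_def])
    then have "AE x in lebesgue. ennreal (w x) * indicator (ball 0 (Suc n)) x = 0"
      by (subst (asm) nn_integral_0_iff_AE) (rule weight_ball_integrand_measurable[OF wt]; simp)
    then show ?thesis
      by eventually_elim (use weight_nonneg[OF wt] in \<open>auto simp: indicator_def\<close>)
  qed
  then have "AE x in lebesgue. \<forall>n. x \<in> ball 0 (Suc n) \<longrightarrow> w x = 0"
    unfolding AE_all_countable using zero_on_balls by blast
  then have "AE x in lebesgue. w x = 0"
  proof eventually_elim
    case (elim x)
    have "x \<in> ball 0 (Suc (nat \<lceil>norm x\<rceil>))" by simp linarith
    with elim show ?case by blast
  qed
  with wt show False unfolding weight_def by blast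
qed

lemma A_infty_wball_lower_bound:
  fixes w :: "'a::euclidean_space \<Rightarrow> real"
  assumes "A_infty w"
  shows "\<exists>\<kappa>>0. \<exists>s>0. \<forall>c r. 0 < r \<longrightarrow> \<kappa> * (r / (1 + r + norm c)) powr s \<le> wball w c r"
proof -
  have wt: "weight w" using A_infty_weight[OF assms] .
  obtain C s where "0 < C" "0 < s"
    and C: "\<And>c r R. 0 < r \<Longrightarrow> r \<le> R \<Longrightarrow> wball w c R \<le> C * (R / r) powr s * wball w c r"
    using A_infty_doubling[OF assms] by blast
  obtain R0 where "1 \<le> R0" "0 < wball w 0 R0" using weight_ball_pos[OF wt] by blast
  define \<kappa> where "\<kappa> = wball w 0 R0 / (C * R0 powr s)"
  have "\<kappa> * (r / (1 + r + norm c)) powr s \<le> wball w c r" if "0 < r" for c r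
  proof -
    define R where "R = R0 * (1 + r + norm c)"
    have "norm c \<le> R0 * norm c" "r \<le> R0 * r" "0 \<le> R0 * norm c"
      using \<open>0 < r\<close> \<open>1 \<le> R0\<close> mult_right_mono[OF \<open>1 \<le> R0\<close>] by auto
    then have "norm c + R0 \<le> R" "r \<le> R"
      using \<open>0 < r\<close> \<open>1 \<le> R0\<close> unfolding R_def distrib_left mult_1_right by (linarith)+
    then have "ball 0 R0 \<subseteq> ball c R"
      by (auto simp: dist_norm intro!: le_less_trans[OF norm_triangle_ineq4])
    then have "wball w 0 R0 \<le> wball w c R" by (rule wball_mono[OF wt])
    also have "\<dots> \<le> C * (R / r) powr s * wball w c r"
      using \<open>0 < r\<close> \<open>r \<le> R\<close> by (rule C)
    also have "(R / r) powr s = R0 powr s * ((1 + r + norm c) / r) powr s"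
      using \<open>1 \<le> R0\<close> \<open>0 < r\<close> by (simp add: R_def powr_mult[symmetric])
    finally have "wball w 0 R0 \<le> C * (R0 powr s * ((1 + r + norm c) / r) powr s) * wball w c r" .
    moreover have "0 < 1 + r + norm c"
      using \<open>0 < r\<close> norm_ge_zero[of c] by linarith
    then have "0 < (1 + r + norm c) powr s" by simp
    moreover have "0 < R0 powr s" using \<open>1 \<le> R0\<close> by simp
    ultimately show ?thesis
      using \<open>0 < C\<close> \<open>0 < r\<close> by (simp add: \<kappa>_def powr_divide field_simps)
  qed
  moreover have "0 < \<kappa>" using \<open>0 < C\<close> \<open>1 \<le> R0\<close> \<open>0 < wball w 0 R0\<close> by (simp add: \<kappa>_def)
  ultimately show ?thesis using \<open>0 < s\<close> by blast
qed

section \<open>Log-Hoelder continuous exponents on balls\<close>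

lemma log_Hoelder_local:
  fixes a :: "'a::real_normed_vector \<Rightarrow> real"
  assumes osc: "\<bar>a x - a y\<bar> \<le> c1 / ln (exp 1 + 1 / norm (x - y))"
    and "0 \<le> c1" "norm (x - y) < 2 * r"
  shows "\<bar>a x - a y\<bar> * ln (1 / (2 * r)) \<le> c1"
proof (cases "x = y \<or> ln (1 / (2 * r)) \<le> 0")
  case True
  then show ?thesis
    using \<open>0 \<le> c1\<close> by (auto intro: order_trans[OF mult_nonneg_nonpos])
next
  case False
  define L where "L = ln (exp 1 + 1 / norm (x - y))"
  have "1 < exp (1::real)" "0 \<le> 1 / norm (x - y)" by simp_all
  then have "0 < L" unfolding L_def by (intro ln_gt_zero) linarith
  have "1 / (2 * r) < 1 / norm (x - y)"
    using False assms by (simp add: frac_less2)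
  then have "1 / (2 * r) \<le> exp 1 + 1 / norm (x - y)"
    using exp_gt_zero[of 1] by linarith
  moreover have "0 < r" using assms(3) norm_ge_zero[of "x - y"] by linarith
  ultimately have "ln (1 / (2 * r)) \<le> L"
    unfolding L_def by (intro ln_mono) auto
  then have "\<bar>a x - a y\<bar> * ln (1 / (2 * r)) \<le> \<bar>a x - a y\<bar> * L"
    by (simp add: mult_left_mono)
  also have "\<dots> \<le> c1"
    using osc \<open>0 < L\<close> by (simp add: L_def pos_le_divide_eq mult.commute)
  finally show ?thesis .
qed

lemma ln_one_plus_norm_le:
  fixes c z :: "'a::real_normed_vector"
  assumes "dist c z < r" "2 * r \<le> 1 + norm c"
  shows "ln (1 + norm c) \<le> ln 2 + ln (exp 1 + norm z)"
proof -
  have "norm c \<le> norm z + r"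
    using assms norm_triangle_sub[of c z] by (simp add: dist_norm)
  then have "1 + norm c \<le> 2 * exp 1 + 2 * norm z"
    using assms exp_ge_add_one_self[of 1] by linarith
  then have "ln (1 + norm c) \<le> ln (2 * (exp 1 + norm z))"
    by (simp add: distrib_left add_pos_nonneg)
  also have "\<dots> = ln 2 + ln (exp 1 + norm z)"
    using add_pos_nonneg[OF exp_gt_zero norm_ge_zero, of 1 z] by (simp only: ln_mult) simp
  finally show ?thesis .
qed

lemma log_Hoelder_decay:
  fixes a :: "'a::real_normed_vector \<Rightarrow> real"
  assumes "\<bar>a x - a_inf\<bar> \<le> c2 / ln (exp 1 + norm x)" "\<bar>a y - a_inf\<bar> \<le> c2 / ln (exp 1 + norm y)"
    and "0 \<le> c2" "x \<in> ball c r" "y \<in> ball c r" "2 * r \<le> 1 + norm c"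
  shows "\<bar>a x - a y\<bar> * ln (1 + norm c) \<le> 2 * c2 * (ln 2 + 1)"
proof -
  have "0 \<le> ln (1 + norm c)" by simp
  have decay: "c2 / ln (exp 1 + norm z) * ln (1 + norm c) \<le> c2 * (ln 2 + 1)" if "z \<in> ball c r" for z
  proof -
    define L where "L = ln (exp 1 + norm z)"
    have "1 \<le> L" unfolding L_def
      by (subst ln_ge_iff) (auto intro: add_pos_nonneg)
    have "c2 / L * ln (1 + norm c) \<le> c2 / L * (ln 2 + L)"
      using ln_one_plus_norm_le[of c z r] that assms \<open>1 \<le> L\<close>
      by (intro mult_left_mono) (auto simp: L_def)
    also have "\<dots> = c2 * (ln 2 / L + 1)" using \<open>1 \<le> L\<close> by (simp add: field_simps)
    also have "\<dots> \<le> c2 * (ln 2 + 1)"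
      using \<open>1 \<le> L\<close> \<open>0 \<le> c2\<close> by (intro mult_left_mono add_right_mono) (auto simp: divide_le_eq)
    finally show ?thesis unfolding L_def .
  qed
  have "\<bar>a x - a y\<bar> * ln (1 + norm c)
      \<le> (c2 / ln (exp 1 + norm x) + c2 / ln (exp 1 + norm y)) * ln (1 + norm c)"
    using assms(1,2) \<open>0 \<le> ln (1 + norm c)\<close> by (intro mult_right_mono) auto
  also have "\<dots> \<le> 2 * c2 * (ln 2 + 1)"
    using decay[OF \<open>x \<in> ball c r\<close>] decay[OF \<open>y \<in> ball c r\<close>] by (simp add: distrib_right)
  finally show ?thesis .
qed

lemma log_Hoelder_ball:
  fixes a :: "'a::real_normed_vector \<Rightarrow> real"
  assumes "x \<in> ball c r" "y \<in> ball c r" "0 \<le> c1" "0 \<le> c2" "\<bar>a x - a y\<bar> \<le> 1"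
    and local: "\<bar>a x - a y\<bar> \<le> c1 / ln (exp 1 + 1 / norm (x - y))"
    and decay: "\<bar>a x - a_inf\<bar> \<le> c2 / ln (exp 1 + norm x)" "\<bar>a y - a_inf\<bar> \<le> c2 / ln (exp 1 + norm y)"
  shows "\<bar>a x - a y\<bar> * ln ((1 + r + norm c) / r) \<le> ln 4 + c1 + 2 * c2 * (ln 2 + 1)"
proof -
  define D where "D = \<bar>a x - a y\<bar>"
  have "0 < r" using \<open>x \<in> ball c r\<close> by (auto intro: le_less_trans[OF zero_le_dist])
  have "0 \<le> 2 * c2 * (ln 2 + 1)" using \<open>0 \<le> c2\<close> by simp
  show ?thesis
  proof (cases "1 + norm c \<le> 2 * r")
    case True
    have "1 \<le> (1 + r + norm c) / r" "(1 + r + norm c) / r \<le> 3"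
      using True \<open>0 < r\<close> by (simp_all add: field_simps)
    then have "D * ln ((1 + r + norm c) / r) \<le> 1 * ln 4"
      using \<open>\<bar>a x - a y\<bar> \<le> 1\<close> by (intro mult_mono) (auto simp: D_def)
    then show ?thesis using \<open>0 \<le> c1\<close> \<open>0 \<le> 2 * c2 * (ln 2 + 1)\<close> by (simp add: D_def)
  next
    case False
    have "1 + r + norm c \<le> 2 + 2 * norm c" using False norm_ge_zero[of c] by linarith
    then have "(1 + r + norm c) / r \<le> (2 + 2 * norm c) / r"
      using \<open>0 < r\<close> by (simp add: divide_right_mono)
    also have "\<dots> = 4 * (1 + norm c) * (1 / (2 * r))"
      using \<open>0 < r\<close> by (simp add: field_simps)
    finally have "(1 + r + norm c) / r \<le> 4 * (1 + norm c) * (1 / (2 * r))" .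
    then have "ln ((1 + r + norm c) / r) \<le> ln (4 * (1 + norm c) * (1 / (2 * r)))"
      using \<open>0 < r\<close> by (intro ln_mono) (auto simp: add_pos_nonneg)
    also have "\<dots> = ln 4 + ln (1 + norm c) + ln (1 / (2 * r))"
      using \<open>0 < r\<close> ln_mult_pos[of "4 * (1 + norm c)" "1 / (2 * r)"] ln_mult_pos[of 4 "1 + norm c"]
      by (simp add: add_pos_nonneg)
    finally have "D * ln ((1 + r + norm c) / r) \<le> D * ln 4 + D * ln (1 + norm c) + D * ln (1 / (2 * r))"
      by (simp add: D_def mult_left_mono flip: distrib_left)
    also have "D * ln 4 \<le> ln 4"
      using \<open>\<bar>a x - a y\<bar> \<le> 1\<close> by (simp add: D_def mult_left_le_one_le)
    also have "D * ln (1 + norm c) \<le> 2 * c2 * (ln 2 + 1)"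
      unfolding D_def using decay \<open>0 \<le> c2\<close> assms(1,2) False by (intro log_Hoelder_decay) auto
    also have "D * ln (1 / (2 * r)) \<le> c1"
    proof -
      have "dist x y < 2 * r"
        using assms(1,2) dist_triangle[of x y c] by (simp add: dist_commute)
      then have "norm (x - y) < 2 * r" by (simp add: dist_norm)
      then show ?thesis
        unfolding D_def using local \<open>0 \<le> c1\<close> by (intro log_Hoelder_local)
    qed
    finally show ?thesis unfolding D_def by simp
  qed
qed

lemma ereal_recip_bounds:
  assumes "1 \<le> p"
  shows "0 \<le> ereal_recip p" "ereal_recip p \<le> 1"
  using assms by (cases p; auto simp: ereal_recip_def)+

lemma recip_Plog_oscillation_ball:
  fixes p :: "'a::euclidean_space \<Rightarrow> ereal"
  assumes "recip_Plog \<Omega> p" "\<forall>x\<in>\<Omega>. 1 \<le> p x"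
  shows "\<exists>M1. \<forall>c r x y. x \<in> ball c r \<inter> \<Omega> \<longrightarrow> y \<in> ball c r \<inter> \<Omega> \<longrightarrow>
    \<bar>ereal_recip (p x) - ereal_recip (p y)\<bar> * ln ((1 + r + norm c) / r) \<le> M1"
proof -
  obtain c1 where "0 < c1" and local: "\<And>x y. x \<in> \<Omega> \<Longrightarrow> y \<in> \<Omega> \<Longrightarrow>
      \<bar>ereal_recip (p x) - ereal_recip (p y)\<bar> \<le> c1 / ln (exp 1 + 1 / norm (x - y))"
    using assms(1) unfolding recip_Plog_def by blast
  obtain p_inf c2 where "0 < c2" and decay: "\<And>x. x \<in> \<Omega> \<Longrightarrow>
      \<bar>ereal_recip (p x) - ereal_recip p_inf\<bar> \<le> c2 / ln (exp 1 + norm x)"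
    using assms(1) unfolding recip_Plog_def by blast
  have "\<bar>ereal_recip (p x) - ereal_recip (p y)\<bar> * ln ((1 + r + norm c) / r)
      \<le> ln 4 + c1 + 2 * c2 * (ln 2 + 1)"
    if "x \<in> ball c r \<inter> \<Omega>" "y \<in> ball c r \<inter> \<Omega>" for c r x y
  proof (rule log_Hoelder_ball[where a="\<lambda>x. ereal_recip (p x)"])
    show "\<bar>ereal_recip (p x) - ereal_recip (p y)\<bar> \<le> 1"
      using that assms(2) ereal_recip_bounds[of "p x"] ereal_recip_bounds[of "p y"] by auto
  qed (use that \<open>0 < c1\<close> \<open>0 < c2\<close> local decay in auto)
  then show ?thesis by blast
qed

lemma A_infty_recip_Plog_oscillation:
  fixes w :: "'a::euclidean_space \<Rightarrow> real" and p :: "'a \<Rightarrow> ereal"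
  assumes "A_infty w" "recip_Plog \<Omega> p" "\<forall>x\<in>\<Omega>. 1 \<le> p x"
  shows "\<exists>M\<ge>0. \<forall>c r x y. 0 < r \<longrightarrow> x \<in> ball c r \<inter> \<Omega> \<longrightarrow> y \<in> ball c r \<inter> \<Omega> \<longrightarrow>
    0 < wball w c r \<and> \<bar>ereal_recip (p x) - ereal_recip (p y)\<bar> * ln (1 / wball w c r) \<le> M"
proof -
  obtain \<kappa> s where "0 < \<kappa>" "0 < s"
    and lower: "\<And>c r. 0 < r \<Longrightarrow> \<kappa> * (r / (1 + r + norm c)) powr s \<le> wball w c r"
    using A_infty_wball_lower_bound[OF assms(1)] by blast
  obtain M1 where M1: "\<And>c r x y. x \<in> ball c r \<inter> \<Omega> \<Longrightarrow> y \<in> ball c r \<inter> \<Omega> \<Longrightarrow>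
      \<bar>ereal_recip (p x) - ereal_recip (p y)\<bar> * ln ((1 + r + norm c) / r) \<le> M1"
    using recip_Plog_oscillation_ball[OF assms(2,3)] by blast
  define M where "M = max 0 (ln (1 / \<kappa>)) + s * max 0 M1"
  have "0 < wball w c r \<and> \<bar>ereal_recip (p x) - ereal_recip (p y)\<bar> * ln (1 / wball w c r) \<le> M"
    if "0 < r" "x \<in> ball c r \<inter> \<Omega>" "y \<in> ball c r \<inter> \<Omega>" for c r x y
  proof -
    define D where "D = \<bar>ereal_recip (p x) - ereal_recip (p y)\<bar>"
    define \<rho> where "\<rho> = (1 + r + norm c) / r"
    have "0 < \<rho>" using \<open>0 < r\<close> by (simp add: \<rho>_def add_pos_nonneg)
    have "0 \<le> D" "D \<le> 1"
      using that assms(3) ereal_recip_bounds[of "p x"] ereal_recip_bounds[of "p y"]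
      by (auto simp: D_def)
    have "0 < \<kappa> * (inverse \<rho>) powr s"
      using \<open>0 < \<kappa>\<close> \<open>0 < \<rho>\<close> by simp
    also have "\<kappa> * (inverse \<rho>) powr s \<le> wball w c r"
      using lower[OF \<open>0 < r\<close>, of c] by (simp add: \<rho>_def)
    finally have "0 < wball w c r" by simp
    have "ln (1 / wball w c r) \<le> ln (1 / (\<kappa> * (inverse \<rho>) powr s))"
      using \<open>0 < \<kappa> * (inverse \<rho>) powr s\<close> \<open>\<kappa> * (inverse \<rho>) powr s \<le> wball w c r\<close>
      by (intro ln_mono) (auto simp: field_simps)
    also have "\<dots> = ln (1 / \<kappa>) + s * ln \<rho>"
      using \<open>0 < \<kappa>\<close> \<open>0 < \<rho>\<close> by (simp add: ln_div ln_mult ln_inverse)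
    finally have "ln (1 / wball w c r) \<le> ln (1 / \<kappa>) + s * ln \<rho>" .
    then have "D * ln (1 / wball w c r) \<le> D * (max 0 (ln (1 / \<kappa>)) + s * ln \<rho>)"
      using \<open>0 \<le> D\<close> by (intro mult_left_mono) auto
    also have "\<dots> = D * max 0 (ln (1 / \<kappa>)) + s * (D * ln \<rho>)"
      by (simp add: algebra_simps)
    also have "\<dots> \<le> M"
      using M1[OF that(2,3)] \<open>0 \<le> D\<close> \<open>D \<le> 1\<close> \<open>0 < s\<close>
      by (auto simp: M_def D_def \<rho>_def intro!: add_mono mult_left_le_one_le mult_left_mono)
    finally show ?thesis unfolding D_def using \<open>0 < wball w c r\<close> by simp
  qed
  moreover have "0 \<le> M" using \<open>0 < s\<close> by (simp add: M_def)
  ultimately show ?thesis by blast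
qed

section \<open>The variable exponent function t^p(x)\<close>

lemma exp_neg_mult_powr_le_powr:
  fixes S L M a b :: real
  assumes "1 \<le> S" "ln S \<le> L" "\<bar>a - b\<bar> * L \<le> M"
  shows "exp (- M) * S powr b \<le> S powr a"
proof -
  have "0 \<le> ln S" using assms(1) by simp
  then have "(b - a) * ln S \<le> \<bar>a - b\<bar> * L"
    using assms(2) by (intro mult_mono) auto
  then have "- M + b * ln S \<le> a * ln S"
    using assms(3) by (simp add: algebra_simps)
  then show ?thesis
    using assms(1) by (simp add: powr_def mult.commute flip: exp_add)
qed

lemma var_exp_phi_finite_exponent:
  assumes "1 \<le> p y" "1 \<le> var_exp_phi p y t" "var_exp_phi p y t < \<infinity>"
  shows "\<exists>P. p y = ereal P \<and> var_exp_phi p y t = ennreal (t powr P)"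
  using assms by (cases "p y") (auto simp: var_exp_phi_def split: if_splits)

lemma var_exp_phi_shift_le:
  fixes p :: "'a \<Rightarrow> ereal"
  assumes "1 \<le> p x" "1 \<le> p y" "0 < W"
    and osc: "\<bar>ereal_recip (p x) - ereal_recip (p y)\<bar> * ln (1 / W) \<le> M"
    and "0 \<le> t" "1 \<le> var_exp_phi p y t" "var_exp_phi p y t \<le> 1 / ennreal W"
  shows "var_exp_phi p x (exp (- M) * t) \<le> var_exp_phi p y t"
proof -
  have "1 / ennreal W = ennreal (1 / W)"
    using \<open>0 < W\<close> by (simp add: divide_ennreal[symmetric])
  then have "var_exp_phi p y t < \<infinity>" using assms(7) by (simp add: le_less_trans)
  then obtain P where P: "p y = ereal P" and phi_y: "var_exp_phi p y t = ennreal (t powr P)"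
    using var_exp_phi_finite_exponent[OF assms(2,6)] by blast
  define S where "S = t powr P"
  have "1 \<le> S" "S \<le> 1 / W"
    using assms(6,7) \<open>1 / ennreal W = ennreal (1 / W)\<close> \<open>0 < W\<close>
    by (simp_all add: phi_y S_def)
  have "1 \<le> P" using P assms(2) by simp
  have "0 < t" using \<open>1 \<le> S\<close> assms(5) by (cases "t = 0") (auto simp: S_def)
  have t_eq: "t = S powr ereal_recip (p y)"
    using \<open>0 < t\<close> \<open>1 \<le> P\<close> by (simp add: P S_def ereal_recip_def powr_powr)
  have bound: "exp (- M) * t \<le> S powr ereal_recip (p x)"
    unfolding t_eq using \<open>1 \<le> S\<close> \<open>S \<le> 1 / W\<close> \<open>0 < W\<close> osc
    by (intro exp_neg_mult_powr_le_powr) auto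
  show ?thesis
  proof (cases "p x")
    case (real Q)
    then have "1 \<le> Q" using assms(1) by simp
    have "(exp (- M) * t) powr Q \<le> (S powr (1 / Q)) powr Q"
      using bound \<open>0 < t\<close> \<open>1 \<le> Q\<close> real by (intro powr_mono2) (auto simp: ereal_recip_def)
    also have "\<dots> = S" using \<open>1 \<le> S\<close> \<open>1 \<le> Q\<close> by (simp add: powr_powr)
    finally show ?thesis unfolding phi_y using real by (simp add: var_exp_phi_def S_def ennreal_leI)
  next
    case PInf
    then have "exp (- M) * t \<le> 1" using bound \<open>1 \<le> S\<close> by (simp add: ereal_recip_def)
    then show ?thesis using PInf by (simp add: var_exp_phi_def)
  qed (use assms(1) in simp)
qed

theorem lemma5p5:
  fixes \<Omega> :: "'a::euclidean_space set" and w :: "'a \<Rightarrow> real" and p :: "'a \<Rightarrow> ereal"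
  assumes "open \<Omega>"
    and "A_infty w"
    and "p \<in> borel_measurable (lebesgue_on \<Omega>)"
    and "\<forall>x\<in>\<Omega>. 1 \<le> p x"
    and "recip_Plog \<Omega> p"
  shows "A1_w w \<Omega> (var_exp_phi p)"
proof -
  obtain M where "0 \<le> M" and osc: "\<And>c r x y. 0 < r \<Longrightarrow> x \<in> ball c r \<inter> \<Omega> \<Longrightarrow> y \<in> ball c r \<inter> \<Omega> \<Longrightarrow>
      0 < wball w c r \<and> \<bar>ereal_recip (p x) - ereal_recip (p y)\<bar> * ln (1 / wball w c r) \<le> M"
    using A_infty_recip_Plog_oscillation[OF assms(2,5,4)] by blast
  have wt: "weight w" using A_infty_weight[OF assms(2)] .
  have "var_exp_phi p x (exp (- M) * t) \<le> var_exp_phi p y t"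
    if "0 < r" "x \<in> ball c r \<inter> \<Omega>" "y \<in> ball c r \<inter> \<Omega>" "0 \<le> t"
      and "1 \<le> var_exp_phi p y t" "var_exp_phi p y t \<le> 1 / wmeas w (ball c r)"
    for c r x y t
    using osc[OF that(1-3)] that assms(4)
    by (intro var_exp_phi_shift_le[where W = "wball w c r"]) (auto simp: wmeas_ball_eq_wball[OF wt])
  then show ?thesis
    unfolding A1_w_def using \<open>0 \<le> M\<close>
    by (intro exI[of _ "exp (- M)"] conjI allI impI AE_I2) auto
qed

end
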